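(* Let $V$ be a two-sided vector space of rank $n$. For a simultaneous basis $y_1,\dots,y_n$ of $V$, let $\phi_1,\dots,\phi_n\in{}^*V$ be given by $\phi_i(y_j)=\delta_{ij}$, and let $\eta:K\to{}^*V\otimes_KV$ be $\eta(a)=a\sum_i\phi_i\otimes y_i$. Then the image of $\eta$ is independent of the choice of simultaneous basis.
   Context: Let $k\subset K$ be fields. A two-sided vector space is a $K\otimes_kK$-module; left (resp. right) multiplication by $K$ is the action of $K\otimes1$ (resp. $1\otimes K$). Rank $n$ means dimension $n$ both as a left and as a right $K$-vector space; a simultaneous basis is a basis for both actions. The left dual ${}^*V$ is $\operatorname{Hom}_K({}_KV,K)$ (left $K$-linear maps) with action $(a\cdot\phi\cdot b)(x)=b\phi(xa)$. The tensor product ${}^*V\otimes_KV$ is formed using the right $K$-action on ${}^*V$ and the left $K$-action on $V$. *)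

theory Defs
  imports Complex_Main "HOL-Library.Poly_Mapping"
begin

definition is_subfield :: "'a::field set \<Rightarrow> bool" where
  "is_subfield k \<longleftrightarrow> 0 \<in> k \<and> 1 \<in> k \<and>
     (\<forall>a\<in>k. \<forall>b\<in>k. a + b \<in> k \<and> a * b \<in> k) \<and>
     (\<forall>a\<in>k. - a \<in> k \<and> inverse a \<in> k)"

text \<open>A two-sided vector space, i.e. a module over K tensor_k K.
  lm a x is the left action a x, rm b x is the right action x b.
  The two actions commute and agree on k.\<close>
definition two_sided_space ::
  "'a::field set \<Rightarrow> ('a \<Rightarrow> 'v::ab_group_add \<Rightarrow> 'v) \<Rightarrow> ('a \<Rightarrow> 'v \<Rightarrow> 'v) \<Rightarrow> bool" where
  "two_sided_space k lm rm \<longleftrightarrow> is_subfield k \<and> module lm \<and> module rm \<and>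
     (\<forall>a b x. lm a (rm b x) = rm b (lm a x)) \<and>
     (\<forall>c\<in>k. \<forall>x. lm c x = rm c x)"

definition has_dim :: "('a::field \<Rightarrow> 'v::ab_group_add \<Rightarrow> 'v) \<Rightarrow> nat \<Rightarrow> bool" where
  "has_dim s n \<longleftrightarrow> (\<exists>B. finite B \<and> card B = n \<and> \<not> module.dependent s B \<and> module.span s B = UNIV)"

definition tsv_rank :: "('a::field \<Rightarrow> 'v::ab_group_add \<Rightarrow> 'v) \<Rightarrow> ('a \<Rightarrow> 'v \<Rightarrow> 'v) \<Rightarrow> nat \<Rightarrow> bool" where
  "tsv_rank lm rm n \<longleftrightarrow> has_dim lm n \<and> has_dim rm n"

text \<open>A family y_0..y_(n-1) (indices shifted by one) which is a basis for both actions.\<close>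
definition is_basis_family :: "('a::field \<Rightarrow> 'v::ab_group_add \<Rightarrow> 'v) \<Rightarrow> nat \<Rightarrow> (nat \<Rightarrow> 'v) \<Rightarrow> bool" where
  "is_basis_family s n y \<longleftrightarrow> inj_on y {..<n} \<and> \<not> module.dependent s (y ` {..<n}) \<and>
     module.span s (y ` {..<n}) = UNIV"

definition simultaneous_basis ::
  "('a::field \<Rightarrow> 'v::ab_group_add \<Rightarrow> 'v) \<Rightarrow> ('a \<Rightarrow> 'v \<Rightarrow> 'v) \<Rightarrow> nat \<Rightarrow> (nat \<Rightarrow> 'v) \<Rightarrow> bool" where
  "simultaneous_basis lm rm n y \<longleftrightarrow> is_basis_family lm n y \<and> is_basis_family rm n y"

definition left_dual :: "('a::field \<Rightarrow> 'v::ab_group_add \<Rightarrow> 'v) \<Rightarrow> ('v \<Rightarrow> 'a) set" where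
  "left_dual lm = {\<phi>. Vector_Spaces.linear lm (*) \<phi>}"

text \<open>Actions on the left dual: (a.phi.b)(x) = b phi(x a).\<close>
definition dual_lact :: "('a::field \<Rightarrow> 'v \<Rightarrow> 'v) \<Rightarrow> 'a \<Rightarrow> ('v \<Rightarrow> 'a) \<Rightarrow> ('v \<Rightarrow> 'a)" where
  "dual_lact rm a \<phi> = (\<lambda>x. \<phi> (rm a x))"

definition dual_ract :: "('v \<Rightarrow> 'a::field) \<Rightarrow> 'a \<Rightarrow> ('v \<Rightarrow> 'a)" where
  "dual_ract \<phi> b = (\<lambda>x. b * \<phi> x)"

definition dual_family ::
  "('a::field \<Rightarrow> 'v::ab_group_add \<Rightarrow> 'v) \<Rightarrow> nat \<Rightarrow> (nat \<Rightarrow> 'v) \<Rightarrow> (nat \<Rightarrow> 'v \<Rightarrow> 'a) \<Rightarrow> bool" where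
  "dual_family lm n y \<phi> \<longleftrightarrow> (\<forall>i<n. \<phi> i \<in> left_dual lm \<and>
      (\<forall>j<n. \<phi> i (y j) = (if i = j then 1 else 0)))"

text \<open>Tensor product *V tensor_K V, built as the free abelian group on pairs
  modulo the subgroup generated by the balanced-bilinearity relations
  (right K-action on *V, left K-action on V).\<close>
definition tgen :: "('v \<Rightarrow> 'a) \<Rightarrow> 'v \<Rightarrow> (('v \<Rightarrow> 'a) \<times> 'v) \<Rightarrow>\<^sub>0 int" where
  "tgen \<phi> y = Poly_Mapping.single (\<phi>, y) 1"

definition tensor_relations ::
  "('a::field \<Rightarrow> 'v::ab_group_add \<Rightarrow> 'v) \<Rightarrow> ((('v \<Rightarrow> 'a) \<times> 'v) \<Rightarrow>\<^sub>0 int) set" where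
  "tensor_relations lm =
     {tgen (\<lambda>x. \<phi> x + \<psi> x) y - tgen \<phi> y - tgen \<psi> y | \<phi> \<psi> y. \<phi> \<in> left_dual lm \<and> \<psi> \<in> left_dual lm}
   \<union> {tgen \<phi> (y + z) - tgen \<phi> y - tgen \<phi> z | \<phi> y z. \<phi> \<in> left_dual lm}
   \<union> {tgen (dual_ract \<phi> b) y - tgen \<phi> (lm b y) | \<phi> b y. \<phi> \<in> left_dual lm}"

inductive_set zspan :: "('b::ab_group_add) set \<Rightarrow> 'b set" for R where
  zspan_zero: "0 \<in> zspan R"
| zspan_gen: "r \<in> R \<Longrightarrow> r \<in> zspan R"
| zspan_diff: "u \<in> zspan R \<Longrightarrow> w \<in> zspan R \<Longrightarrow> u - w \<in> zspan R"

text \<open>The element of *V tensor_K V represented by a formal sum t (its coset).\<close>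
definition tensor_class ::
  "('a::field \<Rightarrow> 'v::ab_group_add \<Rightarrow> 'v) \<Rightarrow> ((('v \<Rightarrow> 'a) \<times> 'v) \<Rightarrow>\<^sub>0 int)
     \<Rightarrow> ((('v \<Rightarrow> 'a) \<times> 'v) \<Rightarrow>\<^sub>0 int) set" where
  "tensor_class lm t = {s. s - t \<in> zspan (tensor_relations lm)}"

text \<open>eta(a) = a . sum_i phi_i tensor y_i = sum_i (a.phi_i) tensor y_i.\<close>
definition eta ::
  "('a::field \<Rightarrow> 'v::ab_group_add \<Rightarrow> 'v) \<Rightarrow> nat \<Rightarrow> (nat \<Rightarrow> 'v) \<Rightarrow> (nat \<Rightarrow> 'v \<Rightarrow> 'a) \<Rightarrow> 'a
     \<Rightarrow> (('v \<Rightarrow> 'a) \<times> 'v) \<Rightarrow>\<^sub>0 int" where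
  "eta rm n y \<phi> a = (\<Sum>i<n. tgen (dual_lact rm a (\<phi> i)) (y i))"

end

theory Submission
  imports Defs
begin

text \<open>
  Writing \<open>y'\<^sub>j = \<Sum>\<^sub>i \<phi>\<^sub>i(y'\<^sub>j) y\<^sub>i\<close> and moving the scalars across the tensor sign gives
  \<open>\<Sum>\<^sub>j (a\<phi>'\<^sub>j) \<otimes> y'\<^sub>j = \<Sum>\<^sub>i (\<Sum>\<^sub>j \<phi>\<^sub>i(y'\<^sub>j) (a\<phi>'\<^sub>j)) \<otimes> y\<^sub>i\<close>. The left factor is \<open>a\<phi>\<^sub>i\<close>, because every
  \<open>\<theta> \<in> *V\<close> satisfies \<open>\<theta> = \<Sum>\<^sub>j \<theta>(y'\<^sub>j) \<phi>'\<^sub>j\<close>. Hence \<open>\<eta>(a)\<close> itself does not depend on the basis,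
  and only the left basis property of the two families is needed.
\<close>

lemma module_field_mult: "module ((*) :: 'a::field \<Rightarrow> 'a \<Rightarrow> 'a)"
  by unfold_locales (auto simp: algebra_simps)

lemma left_dual_iff_module_hom: "\<phi> \<in> left_dual lm \<longleftrightarrow> module_hom lm (*) \<phi>"
  unfolding left_dual_def module_hom_iff_linear by simp

lemma left_dual_iff:
  assumes "module lm"
  shows "\<phi> \<in> left_dual lm \<longleftrightarrow> (\<forall>x y. \<phi> (x + y) = \<phi> x + \<phi> y) \<and> (\<forall>c x. \<phi> (lm c x) = c * \<phi> x)"
  using assms by (simp add: left_dual_iff_module_hom module_hom_iff module_field_mult)

lemma left_dual_zero: "module lm \<Longrightarrow> (\<lambda>x. 0) \<in> left_dual lm"
  by (simp add: left_dual_iff)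

lemma module_pair_field_mult:
  fixes s :: "'a::field \<Rightarrow> 'v::ab_group_add \<Rightarrow> 'v"
  shows "module s \<Longrightarrow> module_pair s (*)"
  by (simp add: module_pair_def module_field_mult)

lemma left_dual_sum:
  "module lm \<Longrightarrow> (\<And>j. j \<in> J \<Longrightarrow> \<psi> j \<in> left_dual lm) \<Longrightarrow> (\<lambda>x. \<Sum>j\<in>J. \<psi> j x) \<in> left_dual lm"
  unfolding left_dual_iff_module_hom
  by (rule module_pair.module_hom_sum[OF module_pair_field_mult]) (auto simp: module_field_mult)

lemma left_dual_dual_ract: "\<phi> \<in> left_dual lm \<Longrightarrow> dual_ract \<phi> b \<in> left_dual lm"
  unfolding left_dual_iff_module_hom dual_ract_def
  by (rule module_pair.module_hom_scale[OF module_pair_field_mult]) (auto dest: module_hom.axioms)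

lemma left_dual_dual_lact:
  assumes "module lm" "module rm" "\<And>a b x. lm a (rm b x) = rm b (lm a x)" "\<phi> \<in> left_dual lm"
  shows "dual_lact rm a \<phi> \<in> left_dual lm"
  using assms by (simp add: left_dual_iff dual_lact_def module.scale_right_distrib) metis

lemma left_dual_sum_scale:
  assumes "\<phi> \<in> left_dual lm"
  shows "\<phi> (\<Sum>j\<in>J. lm (c j) (w j)) = (\<Sum>j\<in>J. c j * \<phi> (w j))"
proof -
  interpret module_hom lm "(*)" \<phi>
    using assms by (simp add: left_dual_iff_module_hom)
  show ?thesis by (simp add: sum scale)
qed

lemma basis_family_expansion:
  assumes "module lm" "is_basis_family lm n y" "dual_family lm n y \<phi>"
  shows "v = (\<Sum>i<n. lm (\<phi> i v) (y i))"
proof -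
  interpret module lm by fact
  have "v \<in> span (y ` {..<n})"
    using assms(2) by (simp add: is_basis_family_def)
  then obtain u where "v = (\<Sum>w\<in>y ` {..<n}. lm (u w) w)"
    by (auto simp: span_finite)
  moreover have "inj_on y {..<n}"
    using assms(2) by (simp add: is_basis_family_def)
  ultimately have v: "v = (\<Sum>i<n. lm (u (y i)) (y i))"
    by (simp add: sum.reindex)
  have "\<phi> j v = u (y j)" if "j < n" for j
  proof -
    have "\<phi> j \<in> left_dual lm"
      using assms(3) \<open>j < n\<close> by (simp add: dual_family_def)
    then have "\<phi> j v = (\<Sum>i<n. u (y i) * \<phi> j (y i))"
      unfolding v by (rule left_dual_sum_scale)
    also have "\<dots> = (\<Sum>i<n. if j = i then u (y i) else 0)"
      using assms(3) \<open>j < n\<close> unfolding dual_family_def by (intro sum.cong) auto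
    finally show ?thesis using \<open>j < n\<close> by simp
  qed
  then have "(\<Sum>i<n. lm (u (y i)) (y i)) = (\<Sum>i<n. lm (\<phi> i v) (y i))"
    by (intro sum.cong) simp_all
  then show ?thesis by (rule trans[OF v])
qed

lemma left_dual_expansion:
  assumes "module lm" "is_basis_family lm n y" "dual_family lm n y \<phi>" "\<theta> \<in> left_dual lm"
  shows "\<theta> x = (\<Sum>j<n. \<theta> (y j) * \<phi> j x)"
proof -
  have "\<theta> x = \<theta> (\<Sum>j<n. lm (\<phi> j x) (y j))"
    by (rule arg_cong[OF basis_family_expansion[OF assms(1-3)]])
  also have "\<dots> = (\<Sum>j<n. \<theta> (y j) * \<phi> j x)"
    by (simp add: left_dual_sum_scale[OF assms(4)] mult.commute)
  finally show ?thesis .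
qed

lemma zspan_minus: "u \<in> zspan R \<Longrightarrow> - u \<in> zspan R"
  using zspan_diff[OF zspan_zero, of u R] by simp

lemma zspan_add: "u \<in> zspan R \<Longrightarrow> w \<in> zspan R \<Longrightarrow> u + w \<in> zspan R"
  using zspan_diff[of u R "- w"] zspan_minus[of w R] by simp

lemma zspan_sum: "(\<And>i. i \<in> I \<Longrightarrow> f i \<in> zspan R) \<Longrightarrow> sum f I \<in> zspan R"
  by (induction I rule: infinite_finite_induct) (auto intro: zspan_zero zspan_add)

lemma zspan_sum_diff: "(\<And>i. i \<in> I \<Longrightarrow> f i - g i \<in> zspan R) \<Longrightarrow> sum f I - sum g I \<in> zspan R"
  using zspan_sum[of I "\<lambda>i. f i - g i" R] by (simp add: sum_subtractf)

lemma tensor_class_eqI: "s - t \<in> zspan (tensor_relations lm) \<Longrightarrow> tensor_class lm s = tensor_class lm t"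
proof -
  assume st: "s - t \<in> zspan (tensor_relations lm)"
  have "u - s \<in> zspan (tensor_relations lm) \<longleftrightarrow> u - t \<in> zspan (tensor_relations lm)" for u
    using zspan_add[OF _ st, of "u - s"] zspan_diff[OF _ st, of "u - t"] by auto
  then show ?thesis unfolding tensor_class_def by blast
qed

lemma tgen_add_left_rel: "\<phi> \<in> left_dual lm \<Longrightarrow> \<psi> \<in> left_dual lm \<Longrightarrow>
  tgen (\<lambda>x. \<phi> x + \<psi> x) y - tgen \<phi> y - tgen \<psi> y \<in> zspan (tensor_relations lm)"
  by (rule zspan_gen) (unfold tensor_relations_def, blast)

lemma tgen_add_right_rel: "\<phi> \<in> left_dual lm \<Longrightarrow>
  tgen \<phi> (y + z) - tgen \<phi> y - tgen \<phi> z \<in> zspan (tensor_relations lm)"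
  by (rule zspan_gen) (unfold tensor_relations_def, blast)

lemma tgen_scale_rel: "\<phi> \<in> left_dual lm \<Longrightarrow>
  tgen \<phi> (lm b y) - tgen (dual_ract \<phi> b) y \<in> zspan (tensor_relations lm)"
proof -
  assume "\<phi> \<in> left_dual lm"
  then have "tgen (dual_ract \<phi> b) y - tgen \<phi> (lm b y) \<in> zspan (tensor_relations lm)"
    by (intro zspan_gen) (unfold tensor_relations_def, blast)
  from zspan_minus[OF this] show ?thesis by simp
qed

lemma tgen_zero_right_rel: "\<phi> \<in> left_dual lm \<Longrightarrow> tgen \<phi> 0 \<in> zspan (tensor_relations lm)"
  using zspan_minus[OF tgen_add_right_rel[of \<phi> lm 0 0]] by simp

lemma tgen_zero_left_rel: "module lm \<Longrightarrow> tgen (\<lambda>x. 0) y \<in> zspan (tensor_relations lm)"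
  using zspan_minus[OF tgen_add_left_rel[of "\<lambda>x. 0" lm "\<lambda>x. 0" y]] left_dual_zero[of lm] by simp

lemma tgen_sum_right_rel: "\<phi> \<in> left_dual lm \<Longrightarrow>
  tgen \<phi> (\<Sum>i\<in>I. w i) - (\<Sum>i\<in>I. tgen \<phi> (w i)) \<in> zspan (tensor_relations lm)"
proof (induction I rule: infinite_finite_induct)
  case (insert a F)
  have "tgen \<phi> (w a + sum w F) - tgen \<phi> (w a) - tgen \<phi> (sum w F) +
    (tgen \<phi> (sum w F) - (\<Sum>i\<in>F. tgen \<phi> (w i))) \<in> zspan (tensor_relations lm)"
    using insert by (intro zspan_add tgen_add_right_rel) auto
  then show ?case using insert by (simp add: algebra_simps)
qed (simp_all add: tgen_zero_right_rel)

lemma tgen_sum_left_rel: "module lm \<Longrightarrow> (\<And>j. j \<in> J \<Longrightarrow> \<psi> j \<in> left_dual lm) \<Longrightarrow>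
  tgen (\<lambda>x. \<Sum>j\<in>J. \<psi> j x) y - (\<Sum>j\<in>J. tgen (\<psi> j) y) \<in> zspan (tensor_relations lm)"
proof (induction J rule: infinite_finite_induct)
  case (insert a F)
  have "tgen (\<lambda>x. \<psi> a x + (\<Sum>j\<in>F. \<psi> j x)) y - tgen (\<psi> a) y - tgen (\<lambda>x. \<Sum>j\<in>F. \<psi> j x) y +
    (tgen (\<lambda>x. \<Sum>j\<in>F. \<psi> j x) y - (\<Sum>j\<in>F. tgen (\<psi> j) y)) \<in> zspan (tensor_relations lm)"
    using insert by (intro zspan_add tgen_add_left_rel left_dual_sum) auto
  then show ?case using insert by (simp add: algebra_simps)
qed (simp_all add: tgen_zero_left_rel)

lemma tgen_sum_change_basis_rel:
  assumes "module lm" "is_basis_family lm n y" "dual_family lm n y \<phi>"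
    and "\<And>j. j \<in> J \<Longrightarrow> \<psi> j \<in> left_dual lm"
  shows "(\<Sum>j\<in>J. tgen (\<psi> j) (w j)) - (\<Sum>i<n. tgen (\<lambda>x. \<Sum>j\<in>J. \<phi> i (w j) * \<psi> j x) (y i))
    \<in> zspan (tensor_relations lm)"
proof -
  let ?Z = "zspan (tensor_relations lm)"
  let ?c = "\<lambda>j i. \<phi> i (w j)"
  have expand: "(\<Sum>j\<in>J. tgen (\<psi> j) (w j)) = (\<Sum>j\<in>J. tgen (\<psi> j) (\<Sum>i<n. lm (?c j i) (y i)))"
    by (rule sum.cong[OF refl], rule arg_cong[OF basis_family_expansion[OF assms(1-3)]])
  have sum_right: "(\<Sum>j\<in>J. tgen (\<psi> j) (\<Sum>i<n. lm (?c j i) (y i)))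
      - (\<Sum>j\<in>J. \<Sum>i<n. tgen (\<psi> j) (lm (?c j i) (y i))) \<in> ?Z"
    using assms(4) by (intro zspan_sum_diff tgen_sum_right_rel)
  have scale: "(\<Sum>j\<in>J. \<Sum>i<n. tgen (\<psi> j) (lm (?c j i) (y i)))
      - (\<Sum>i<n. \<Sum>j\<in>J. tgen (dual_ract (\<psi> j) (?c j i)) (y i)) \<in> ?Z"
    unfolding sum.swap[of _ "{..<n}"] using assms(4) by (intro zspan_sum_diff tgen_scale_rel)
  have sum_left: "(\<Sum>i<n. tgen (\<lambda>x. \<Sum>j\<in>J. dual_ract (\<psi> j) (?c j i) x) (y i))
      - (\<Sum>i<n. \<Sum>j\<in>J. tgen (dual_ract (\<psi> j) (?c j i)) (y i)) \<in> ?Z"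
    using assms(1,4) by (intro zspan_sum_diff tgen_sum_left_rel left_dual_dual_ract)
  from zspan_diff[OF zspan_add[OF sum_right scale] sum_left] show ?thesis
    unfolding expand dual_ract_def by (simp add: algebra_simps)
qed

lemma eta_change_basis_rel:
  assumes "module lm" "module rm" "\<And>a b x. lm a (rm b x) = rm b (lm a x)"
    and "is_basis_family lm n y" "dual_family lm n y \<phi>"
    and "is_basis_family lm n y'" "dual_family lm n y' \<phi>'"
  shows "eta rm n y' \<phi>' a - eta rm n y \<phi> a \<in> zspan (tensor_relations lm)"
proof -
  have left_dual: "\<phi> i \<in> left_dual lm" "\<phi>' i \<in> left_dual lm" if "i < n" for i
    using assms(5,7) that by (auto simp: dual_family_def)
  have "dual_lact rm a (\<phi> i) = (\<lambda>x. \<Sum>j<n. \<phi> i (y' j) * dual_lact rm a (\<phi>' j) x)" if "i < n" for i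
    unfolding dual_lact_def by (rule ext, rule left_dual_expansion[OF assms(1,6,7) left_dual(1)[OF that]])
  then have "eta rm n y \<phi> a = (\<Sum>i<n. tgen (\<lambda>x. \<Sum>j<n. \<phi> i (y' j) * dual_lact rm a (\<phi>' j) x) (y i))"
    unfolding eta_def by simp
  moreover have "eta rm n y' \<phi>' a
      - (\<Sum>i<n. tgen (\<lambda>x. \<Sum>j<n. \<phi> i (y' j) * dual_lact rm a (\<phi>' j) x) (y i))
      \<in> zspan (tensor_relations lm)"
    unfolding eta_def
    by (rule tgen_sum_change_basis_rel[OF assms(1,4,5)])
      (simp add: left_dual_dual_lact[OF assms(1-3)] left_dual(2))
  ultimately show ?thesis by simp
qed

theorem proposition3p9:
  fixes k :: "'a::field set"
    and lm rm :: "'a \<Rightarrow> 'v::ab_group_add \<Rightarrow> 'v"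
    and n :: nat
    and y y' :: "nat \<Rightarrow> 'v"
    and \<phi> \<phi>' :: "nat \<Rightarrow> 'v \<Rightarrow> 'a"
  assumes "two_sided_space k lm rm"
    and "tsv_rank lm rm n"
    and "simultaneous_basis lm rm n y"
    and "dual_family lm n y \<phi>"
    and "simultaneous_basis lm rm n y'"
    and "dual_family lm n y' \<phi>'"
  shows "tensor_class lm ` range (eta rm n y \<phi>) = tensor_class lm ` range (eta rm n y' \<phi>')"
proof -
  have "module lm" "module rm" "\<And>a b x. lm a (rm b x) = rm b (lm a x)"
    using assms(1) by (simp_all add: two_sided_space_def)
  moreover have "is_basis_family lm n y" "is_basis_family lm n y'"
    using assms(3,5) by (simp_all add: simultaneous_basis_def)
  ultimately have "tensor_class lm (eta rm n y \<phi> a) = tensor_class lm (eta rm n y' \<phi>' a)" for a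
    using assms(4,6) by (intro tensor_class_eqI eta_change_basis_rel) simp_all
  then show ?thesis by (simp add: image_image)
qed

end
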